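(* Let $\varepsilon,\delta>0$ be constants and let $u_\pm$ be real numbers with $u_->u_+$ and \[ 0<\frac{\delta(u_--u_+)}{2\varepsilon^2}\le\frac14 . \] Let $\tilde u$ be a monotone viscous-dispersive shock of the KdV--Burgers equation $u_t+(u^2/2)_x=\varepsilon u_{xx}-\delta u_{xxx}$ connecting $u_-$ and $u_+$, normalized so that $\tilde u(0)=\frac{u_-+u_+}{2}$. Set $\underline\lambda=\sqrt2-1$ and $\bar\lambda=1$. Then \[ \frac{u_--u_+}{2}e^{-\frac{\bar\lambda(u_--u_+)|x|}{\varepsilon}}\le u_--\tilde u(x)\le\frac{u_--u_+}{2}e^{-\frac{\underline\lambda(u_--u_+)|x|}{2\varepsilon}}\qquad\forall x\le0, \] \[ \frac{u_--u_+}{2}e^{-\frac{\bar\lambda(u_--u_+)|x|}{\varepsilon}}\le \tilde u(x)-u_+\le\frac{u_--u_+}{2}e^{-\frac{\underline\lambda(u_--u_+)|x|}{2\varepsilon}}\qquad\forall x\ge0, \] \[ \frac{\underline\lambda(u_--u_+)^2}{4\varepsilon}e^{-\frac{\bar\lambda(u_--u_+)|x|}{\varepsilon}}\le-\tilde u'(x)\le\frac{\bar\lambda(u_--u_+)^2}{2\varepsilon}e^{-\frac{\underline\lambda(u_--u_+)|x|}{2\varepsilon}}\qquad\forall x\in\mathbb R . \]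
   Context: A viscous-dispersive shock connecting $u_-$ and $u_+$ (with $u_->u_+$) is a smooth function $\tilde u:\mathbb R\to\mathbb R$ such that $\tilde u(x-\sigma t)$ solves $u_t+(u^2/2)_x=\varepsilon u_{xx}-\delta u_{xxx}$, i.e. $-\sigma\tilde u'+(\tilde u^2/2)'=\varepsilon\tilde u''-\delta\tilde u'''$, with $\tilde u(\xi)\to u_\pm$ and $\tilde u'(\xi)\to0$ as $\xi\to\pm\infty$, where $\sigma=\frac{u_-+u_+}{2}$. *)

theory Defs
  imports "HOL-Analysis.Analysis"
begin

text \<open>Viscous-dispersive shock of KdV-Burgers connecting um (left state) and up (right state),
  with speed sigma = (um + up)/2: a smooth profile solving the travelling wave ODE
  -sigma u' + (u^2/2)' = eps u'' - delta u''' with the stated end behaviour.\<close>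
definition vd_shock :: "real \<Rightarrow> real \<Rightarrow> real \<Rightarrow> real \<Rightarrow> (real \<Rightarrow> real) \<Rightarrow> bool" where
  "vd_shock eps delta um up u \<longleftrightarrow>
     (\<forall>n x. ((deriv ^^ n) u) differentiable (at x)) \<and>
     (\<forall>\<xi>. - ((um + up) / 2) * deriv u \<xi> + u \<xi> * deriv u \<xi>
            = eps * (deriv ^^ 2) u \<xi> - delta * (deriv ^^ 3) u \<xi>) \<and>
     (u \<longlongrightarrow> um) at_bot \<and> (u \<longlongrightarrow> up) at_top \<and>
     (deriv u \<longlongrightarrow> 0) at_bot \<and> (deriv u \<longlongrightarrow> 0) at_top"

end

theory Submission
  imports Defs
begin

(* Integrating the travelling-wave equation once, with the constant fixed by the behaviour at +\<infinity>,
   gives delta u'' = eps u' + Q/2 with Q = (u_- - u)(u - u_+) >= 0.  When delta (u_- - u_+) <= eps^2/2,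
   the functions -eps u' - Q and lam Q + eps u' can only increase where they are positive; since they
   tend to 0 at +\<infinity>, they are nonpositive, i.e. lam Q / eps <= -u' <= Q / eps.  The lower barrier
   needs lam^2 + 2 lam <= 1, whence lam = sqrt 2 - 1.  On each half-line one factor of Q lies between
   (u_- - u_+)/2 and u_- - u_+, so the distance of u to the end state satisfies linear differential
   inequalities, and Gronwall's inequality yields the exponential bounds; inserting these into the
   bounds for -u' by Q gives the bounds for the derivative. *)

lemma nonpos_if_deriv_pos_where_pos:
  fixes F F' :: "real \<Rightarrow> real"
  assumes deriv: "\<And>x. (F has_real_derivative F' x) (at x)"
    and pos: "\<And>x. F x > 0 \<Longrightarrow> F' x > 0"
    and lim: "(F \<longlongrightarrow> 0) at_top"
  shows "F x \<le> 0"
proof (rule ccontr)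
  assume "\<not> F x \<le> 0"
  then have "F x > 0" by simp
  with lim have "eventually (\<lambda>t. F t < F x) at_top" by (rule order_tendstoD(2))
  then obtain N where N: "\<And>t. t \<ge> N \<Longrightarrow> F t < F x" by (auto simp: eventually_at_top_linorder)
  define x1 where "x1 = max N (x + 1)"
  have x1: "x < x1" "F x1 < F x" using N unfolding x1_def by auto
  have cont: "continuous_on {x..x1} F"
    using deriv by (meson DERIV_isCont continuous_at_imp_continuous_on)
  obtain t where t: "t \<in> {x..x1}" and max: "\<And>y. y \<in> {x..x1} \<Longrightarrow> F y \<le> F t"
    using continuous_attains_sup[OF compact_Icc _ cont] x1(1) by auto
  have "F t \<ge> F x" using max x1 by simp
  with x1(2) have "t \<noteq> x1" by auto
  with t have "t < x1" by simp
  from \<open>F t \<ge> F x\<close> have "F' t > 0" using pos \<open>F x > 0\<close> by simp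
  then obtain d where "d > 0" and inc: "\<And>h. 0 < h \<Longrightarrow> h < d \<Longrightarrow> F t < F (t + h)"
    using DERIV_pos_inc_right[OF deriv] by blast
  define h where "h = min (d/2) (x1 - t)"
  have "0 < h" "h < d" "t + h \<in> {x..x1}" using t \<open>t < x1\<close> \<open>d > 0\<close> unfolding h_def by auto
  then show False using inc[of h] max[of "t + h"] by simp
qed

lemma tendsto_deriv_at_top_eq_0:
  fixes g g' :: "real \<Rightarrow> real"
  assumes deriv: "\<And>x. (g has_real_derivative g' x) (at x)"
    and lim_deriv: "(g' \<longlongrightarrow> L) at_top" and lim: "(g \<longlongrightarrow> c) at_top"
  shows "L = 0"
proof -
  have "\<exists>z>x. g (x + 1) - g x = g' z" for x
    using MVT2[of x "x + 1" g g'] deriv by force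
  then obtain z where z: "\<And>x. x < z x" "\<And>x. g (x + 1) - g x = g' (z x)"
    by metis
  have "filterlim z at_top at_top"
    using filterlim_ident by (rule filterlim_at_top_mono) (use z in \<open>simp add: less_imp_le\<close>)
  with lim_deriv have "((\<lambda>x. g (x + 1) - g x) \<longlongrightarrow> L) at_top"
    unfolding z(2) by (rule filterlim_compose)
  moreover have "filterlim (\<lambda>x. x + 1) at_top (at_top :: real filter)"
    by (rule filterlim_at_top_mono[OF filterlim_ident]) simp
  then have "((\<lambda>x. g (x + 1) - g x) \<longlongrightarrow> c - c) at_top"
    by (intro tendsto_diff filterlim_compose[OF lim] lim)
  ultimately show ?thesis by (simp add: tendsto_unique[OF trivial_limit_at_top_linorder])
qed

lemma gronwall_lower_bound:
  fixes f f' :: "real \<Rightarrow> real"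
  assumes deriv: "\<And>t. (f has_real_derivative f' t) (at t)" and "x0 \<le> x"
    and ge: "\<And>t. x0 \<le> t \<Longrightarrow> t \<le> x \<Longrightarrow> - k * f t \<le> f' t"
  shows "f x0 * exp (- k * (x - x0)) \<le> f x"
proof -
  define g where "g t = f t * exp (k * t)" for t
  have deriv_g: "(g has_real_derivative (f' t + k * f t) * exp (k * t)) (at t)" for t
    unfolding g_def by (auto intro!: derivative_eq_intros deriv simp: algebra_simps)
  have "g x0 \<le> g x"
  proof (rule DERIV_nonneg_imp_nondecreasing[OF \<open>x0 \<le> x\<close>])
    fix t assume "x0 \<le> t" "t \<le> x"
    with ge have "- k * f t \<le> f' t" by blast
    then have "0 \<le> f' t + k * f t" by simp
    then have "0 \<le> (f' t + k * f t) * exp (k * t)" by simp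
    with deriv_g show "\<exists>y. (g has_real_derivative y) (at t) \<and> 0 \<le> y" by blast
  qed
  then have "g x0 * exp (- k * x) \<le> g x * exp (- k * x)" by (simp add: mult_right_mono)
  then show ?thesis unfolding g_def by (simp add: algebra_simps flip: exp_add)
qed

lemma gronwall_upper_bound:
  fixes f f' :: "real \<Rightarrow> real"
  assumes deriv: "\<And>t. (f has_real_derivative f' t) (at t)" and "x0 \<le> x"
    and le: "\<And>t. x0 \<le> t \<Longrightarrow> t \<le> x \<Longrightarrow> f' t \<le> - k * f t"
  shows "f x \<le> f x0 * exp (- k * (x - x0))"
proof -
  have "- f x0 * exp (- k * (x - x0)) \<le> - f x"
  proof (rule gronwall_lower_bound[OF _ \<open>x0 \<le> x\<close>])
    show "((\<lambda>t. - f t) has_real_derivative - f' t) (at t)" for t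
      using deriv by (rule DERIV_minus)
    show "- k * - f t \<le> - f' t" if "x0 \<le> t" "t \<le> x" for t
      using le[OF that] by simp
  qed
  then show ?thesis by simp
qed

lemma antimono_between_limits:
  fixes u :: "real \<Rightarrow> real"
  assumes "antimono u" and "(u \<longlongrightarrow> um) at_bot" and "(u \<longlongrightarrow> up) at_top"
  shows "up \<le> u x" and "u x \<le> um"
proof -
  show "up \<le> u x"
    by (rule tendsto_upperbound[OF assms(3)])
      (auto simp: eventually_at_top_linorder intro!: exI[of _ x] antimonoD[OF assms(1)])
  show "u x \<le> um"
    by (rule tendsto_lowerbound[OF assms(2)])
      (auto simp: eventually_at_bot_linorder intro!: exI[of _ x] antimonoD[OF assms(1)])
qed

lemma antimono_if_limits_decrease:
  fixes u :: "real \<Rightarrow> real"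
  assumes "mono u \<or> antimono u" and "(u \<longlongrightarrow> um) at_bot" and "(u \<longlongrightarrow> up) at_top"
    and "up < um"
  shows "antimono u"
proof (rule ccontr)
  assume "\<not> antimono u"
  with assms(1) have "mono u" by blast
  then have "antimono (\<lambda>x. - u x)" by (simp add: monotone_def)
  moreover have "((\<lambda>x. - u x) \<longlongrightarrow> - um) at_bot" "((\<lambda>x. - u x) \<longlongrightarrow> - up) at_top"
    using assms(2,3) by (auto intro: tendsto_minus)
  ultimately have "- up \<le> - u 0" "- u 0 \<le> - um" by (rule antimono_between_limits)+
  with \<open>up < um\<close> show False by simp
qed

lemma vd_shock_has_deriv:
  assumes "vd_shock eps delta um up u"
  shows "((deriv ^^ n) u has_real_derivative (deriv ^^ Suc n) u x) (at x)"
  using assms unfolding vd_shock_def by (simp add: DERIV_deriv_iff_real_differentiable)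

lemma vd_shock_first_integral:
  assumes shock: "vd_shock eps delta um up u"
  shows "delta * deriv (deriv u) x = eps * deriv u x + (um - u x) * (u x - up) / 2"
proof -
  have deriv_u: "(u has_real_derivative deriv u x) (at x)"
    and deriv2_u: "(deriv u has_real_derivative deriv (deriv u) x) (at x)"
    and deriv3_u: "(deriv (deriv u) has_real_derivative deriv (deriv (deriv u)) x) (at x)" for x
    using vd_shock_has_deriv[OF shock, of 0 x] vd_shock_has_deriv[OF shock, of 1 x]
      vd_shock_has_deriv[OF shock, of 2 x] by (simp_all add: numeral_2_eq_2)
  have ode: "- ((um + up) / 2) * deriv u x + u x * deriv u x
      = eps * deriv (deriv u) x - delta * deriv (deriv (deriv u)) x" for x
    using shock unfolding vd_shock_def by (simp add: numeral_2_eq_2 numeral_3_eq_3)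
  define H where "H x = delta * deriv (deriv u) x - eps * deriv u x - (um - u x) * (u x - up) / 2" for x
  have "(H has_real_derivative 0) (at x)" for x
  proof -
    have "(H has_real_derivative delta * deriv (deriv (deriv u)) x - eps * deriv (deriv u) x
        - (deriv u x * (um + up - 2 * u x)) / 2) (at x)"
      unfolding H_def by (auto intro!: derivative_eq_intros deriv_u deriv2_u deriv3_u
          simp: field_simps)
    with ode[of x] show ?thesis by (simp add: field_simps)
  qed
  then have H_const: "H x = H 0" for x by (metis DERIV_isconst_all)
  have lim: "(u \<longlongrightarrow> up) at_top" "(deriv u \<longlongrightarrow> 0) at_top"
    using shock unfolding vd_shock_def by auto
  have "delta * deriv (deriv u) x = H 0 + eps * deriv u x + (um - u x) * (u x - up) / 2" for x
    using H_const[of x] unfolding H_def[of x] by simp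
  moreover have "((\<lambda>x. H 0 + eps * deriv u x + (um - u x) * (u x - up) / 2)
      \<longlongrightarrow> H 0 + eps * 0 + (um - up) * (up - up) / 2) at_top"
    by (intro tendsto_intros lim) simp
  ultimately have lim_u'': "((\<lambda>x. delta * deriv (deriv u) x) \<longlongrightarrow> H 0) at_top" by simp
  have lim_u': "((\<lambda>x. delta * deriv u x) \<longlongrightarrow> delta * 0) at_top"
    by (intro tendsto_intros lim)
  have "H 0 = 0"
    by (rule tendsto_deriv_at_top_eq_0[OF DERIV_cmult[OF deriv2_u] lim_u'' lim_u'])
  with H_const[of x] show ?thesis unfolding H_def[of x] by simp
qed

locale kdvb_profile =
  fixes eps delta um up :: real and u u' u'' :: "real \<Rightarrow> real"
  assumes eps_pos: "0 < eps" and delta_pos: "0 < delta"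
    and weak_dispersion: "delta * (um - up) \<le> eps^2 / 2"
    and has_deriv: "\<And>x. (u has_real_derivative u' x) (at x)"
      "\<And>x. (u' has_real_derivative u'' x) (at x)"
    and first_integral: "\<And>x. delta * u'' x = eps * u' x + (um - u x) * (u x - up) / 2"
    and between_limits: "\<And>x. up \<le> u x" "\<And>x. u x \<le> um"
    and tendsto_at_top: "(u \<longlongrightarrow> up) at_top" "(u' \<longlongrightarrow> 0) at_top"
begin

lemma abs_dispersion_le: "\<bar>delta * (2 * u x - um - up)\<bar> \<le> eps^2 / 2"
proof -
  have "\<bar>2 * u x - um - up\<bar> \<le> um - up" using between_limits[of x] by simp
  then have "delta * \<bar>2 * u x - um - up\<bar> \<le> delta * (um - up)"
    using delta_pos by (simp add: mult_left_mono)
  with weak_dispersion have "delta * \<bar>2 * u x - um - up\<bar> \<le> eps^2 / 2" by linarith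
  with delta_pos show ?thesis by (simp add: abs_mult)
qed

lemma gap_product_nonneg: "0 \<le> (um - u x) * (u x - up)"
  using between_limits[of x] by simp

lemma tendsto_gap_product: "((\<lambda>x. (um - u x) * (u x - up)) \<longlongrightarrow> 0) at_top"
proof -
  have "((\<lambda>x. (um - u x) * (u x - up)) \<longlongrightarrow> (um - up) * (up - up)) at_top"
    by (intro tendsto_intros tendsto_at_top(1))
  then show ?thesis by simp
qed

lemma neg_deriv_le: "- u' x \<le> (um - u x) * (u x - up) / eps"
proof -
  define F where "F x = - eps * u' x - (um - u x) * (u x - up)" for x
  define F' where "F' x = - eps * u'' x + u' x * (2 * u x - um - up)" for x
  have "(F has_real_derivative F' x) (at x)" for x
    unfolding F_def F'_def
    by (auto intro!: derivative_eq_intros has_deriv) (simp add: algebra_simps)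
  moreover have "F' x > 0" if "F x > 0" for x
  proof -
    define Q where "Q = (um - u x) * (u x - up)"
    define c where "c = eps^2 - delta * (2 * u x - um - up)"
    have "eps^2 / 2 \<le> c" using abs_dispersion_le[of x] unfolding c_def by linarith
    moreover have "0 < eps^2" using eps_pos by simp
    ultimately have "0 < c" by linarith
    have "Q / eps < - u' x" using that eps_pos unfolding F_def Q_def by (simp add: field_simps)
    then have "c * (Q / eps) < c * - u' x" using \<open>0 < c\<close> by (rule mult_strict_left_mono)
    moreover have "eps^2 / 2 * (Q / eps) \<le> c * (Q / eps)"
      using \<open>eps^2 / 2 \<le> c\<close> gap_product_nonneg[of x] eps_pos unfolding Q_def
      by (intro mult_right_mono) auto
    moreover have "delta * F' x = - eps * (delta * u'' x) + delta * u' x * (2 * u x - um - up)"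
      unfolding F'_def by (simp add: algebra_simps)
    then have "delta * F' x = c * - u' x - eps * Q / 2"
      unfolding first_integral c_def Q_def by (simp add: field_simps power2_eq_square)
    moreover have "eps^2 / 2 * (Q / eps) = eps * Q / 2"
      using eps_pos by (simp add: power2_eq_square)
    ultimately have "0 < delta * F' x" by linarith
    with delta_pos show ?thesis by (simp add: zero_less_mult_iff)
  qed
  moreover have "(F \<longlongrightarrow> 0) at_top"
    unfolding F_def
    using tendsto_diff[OF tendsto_mult[OF tendsto_const tendsto_at_top(2)] tendsto_gap_product,
        of "- eps"]
    by simp
  ultimately have "F x \<le> 0" by (rule nonpos_if_deriv_pos_where_pos)
  with eps_pos show ?thesis unfolding F_def by (simp add: field_simps)
qed

lemma neg_deriv_ge:
  assumes "0 \<le> lam" and "lam^2 + 2 * lam \<le> 1"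
  shows "lam * ((um - u x) * (u x - up)) / eps \<le> - u' x"
proof -
  define F where "F x = lam * ((um - u x) * (u x - up)) + eps * u' x" for x
  define F' where "F' x = - lam * u' x * (2 * u x - um - up) + eps * u'' x" for x
  have "(F has_real_derivative F' x) (at x)" for x
    unfolding F_def F'_def
    by (auto intro!: derivative_eq_intros has_deriv) (simp add: algebra_simps)
  moreover have "F' x > 0" if "F x > 0" for x
  proof -
    define Q where "Q = (um - u x) * (u x - up)"
    define d where "d = delta * (2 * u x - um - up)"
    define c where "c = eps^2 - lam * d"
    have d_le: "\<bar>d\<bar> \<le> eps^2 / 2" using abs_dispersion_le unfolding d_def .
    have "0 \<le> lam^2" by simp
    with assms have "lam \<le> 1" by linarith
    have "lam * d \<le> lam * (eps^2 / 2)"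
      using d_le \<open>0 \<le> lam\<close> by (intro mult_left_mono) auto
    also have "\<dots> \<le> eps^2 / 2"
      using \<open>lam \<le> 1\<close> \<open>0 \<le> lam\<close> by (intro mult_left_le_one_le) auto
    finally have "lam * d \<le> eps^2 / 2" .
    moreover have "0 < eps^2" using eps_pos by simp
    ultimately have "0 < c" unfolding c_def by linarith
    have "- (lam^2 * d) \<le> lam^2 * (eps^2 / 2)"
      using d_le by (intro mult_left_mono[of "- d", simplified]) auto
    then have "lam * c \<le> (lam^2 + 2 * lam) * (eps^2 / 2)"
      unfolding c_def by (simp add: algebra_simps power2_eq_square)
    also have "\<dots> \<le> eps^2 / 2"
      using assms by (intro mult_left_le_one_le) auto
    finally have "lam * c \<le> eps^2 / 2" .
    have "- u' x < lam * Q / eps" using that eps_pos unfolding F_def Q_def by (simp add: field_simps)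
    then have "c * - u' x < c * (lam * Q / eps)" using \<open>0 < c\<close> by (rule mult_strict_left_mono)
    moreover have "0 \<le> Q / eps" using gap_product_nonneg[of x] eps_pos unfolding Q_def by simp
    then have "(lam * c) * (Q / eps) \<le> eps^2 / 2 * (Q / eps)"
      using \<open>lam * c \<le> eps^2 / 2\<close> by (intro mult_right_mono)
    then have "c * (lam * Q / eps) \<le> eps^2 / 2 * (Q / eps)" by (simp add: ac_simps)
    moreover have "delta * F' x = - lam * u' x * d + eps * (delta * u'' x)"
      unfolding F'_def d_def by (simp add: algebra_simps)
    then have "delta * F' x = eps * Q / 2 - c * - u' x"
      unfolding first_integral c_def Q_def by (simp add: field_simps power2_eq_square)
    moreover have "eps^2 / 2 * (Q / eps) = eps * Q / 2"
      using eps_pos by (simp add: power2_eq_square)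
    ultimately have "0 < delta * F' x" by linarith
    with delta_pos show ?thesis by (simp add: zero_less_mult_iff)
  qed
  moreover have "(F \<longlongrightarrow> 0) at_top"
    unfolding F_def
    using tendsto_add[OF tendsto_mult[OF tendsto_const tendsto_gap_product]
        tendsto_mult[OF tendsto_const tendsto_at_top(2)]]
    by simp
  ultimately have "F x \<le> 0" by (rule nonpos_if_deriv_pos_where_pos)
  with eps_pos show ?thesis unfolding F_def by (simp add: field_simps)
qed

end

lemma exp_decay_right:
  fixes u u' :: "real \<Rightarrow> real"
  assumes "0 < eps" and "0 \<le> lam"
    and deriv: "\<And>x. (u has_real_derivative u' x) (at x)"
    and right_half: "\<And>x. 0 \<le> x \<Longrightarrow> up \<le> u x \<and> u x \<le> (um + up) / 2"
    and riccati: "\<And>x. 0 \<le> x \<Longrightarrow>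
      lam * ((um - u x) * (u x - up)) / eps \<le> - u' x \<and> - u' x \<le> (um - u x) * (u x - up) / eps"
    and mid: "u 0 = (um + up) / 2"
    and "0 \<le> x"
  shows "(um - up) / 2 * exp (- (um - up) * \<bar>x\<bar> / eps) \<le> u x - up"
    and "u x - up \<le> (um - up) / 2 * exp (- lam * (um - up) * \<bar>x\<bar> / (2 * eps))"
    and "lam * (um - up)^2 / (4 * eps) * exp (- (um - up) * \<bar>x\<bar> / eps) \<le> - u' x"
    and "- u' x \<le> (um - up)^2 / (2 * eps) * exp (- lam * (um - up) * \<bar>x\<bar> / (2 * eps))"
proof -
  define a where "a = (um - up) / 2"
  define k_hi where "k_hi = 2 * a / eps"
  define k_lo where "k_lo = lam * a / eps"
  have linear_bounds: "k_lo * (u t - up) \<le> - u' t" "- u' t \<le> k_hi * (u t - up)" if "0 \<le> t" for t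
  proof -
    have "a \<le> um - u t" "um - u t \<le> 2 * a" "0 \<le> u t - up"
      using right_half[OF that] unfolding a_def by auto
    then have "lam * (a * (u t - up)) \<le> lam * ((um - u t) * (u t - up))"
      and "(um - u t) * (u t - up) \<le> 2 * a * (u t - up)"
      using \<open>0 \<le> lam\<close> by (auto intro!: mult_left_mono mult_right_mono)
    with riccati[OF that] \<open>0 < eps\<close> show "k_lo * (u t - up) \<le> - u' t" "- u' t \<le> k_hi * (u t - up)"
      unfolding k_lo_def k_hi_def by (auto simp: field_simps)
  qed
  have deriv_gap: "((\<lambda>t. u t - up) has_real_derivative u' t) (at t)" for t
    using deriv by (auto intro!: derivative_eq_intros)
  have "u 0 - up = a" using mid unfolding a_def by simp
  have lower: "a * exp (- k_hi * x) \<le> u x - up"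
    using gronwall_lower_bound[OF deriv_gap \<open>0 \<le> x\<close>, of k_hi] linear_bounds(2)
      \<open>u 0 - up = a\<close> by fastforce
  have upper: "u x - up \<le> a * exp (- k_lo * x)"
    using gronwall_upper_bound[OF deriv_gap \<open>0 \<le> x\<close>, of k_lo] linear_bounds(1)
      \<open>u 0 - up = a\<close> by fastforce
  have "0 \<le> k_lo" "0 \<le> k_hi"
    using \<open>0 < eps\<close> \<open>0 \<le> lam\<close> right_half[OF \<open>0 \<le> x\<close>] unfolding k_lo_def k_hi_def a_def by auto
  have "k_lo * a * exp (- k_hi * x) \<le> k_lo * (u x - up)"
    using mult_left_mono[OF lower \<open>0 \<le> k_lo\<close>] by (simp add: mult.assoc)
  also have "\<dots> \<le> - u' x" using linear_bounds(1)[OF \<open>0 \<le> x\<close>] .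
  finally have deriv_lower: "k_lo * a * exp (- k_hi * x) \<le> - u' x" .
  have "- u' x \<le> k_hi * (u x - up)" using linear_bounds(2)[OF \<open>0 \<le> x\<close>] .
  also have "\<dots> \<le> k_hi * a * exp (- k_lo * x)"
    using mult_left_mono[OF upper \<open>0 \<le> k_hi\<close>] by (simp add: mult.assoc)
  finally have deriv_upper: "- u' x \<le> k_hi * a * exp (- k_lo * x)" .
  have rates: "- (um - up) * \<bar>x\<bar> / eps = - k_hi * x"
    "- lam * (um - up) * \<bar>x\<bar> / (2 * eps) = - k_lo * x"
    and coefficients: "(um - up) / 2 = a" "lam * (um - up)^2 / (4 * eps) = k_lo * a"
    "(um - up)^2 / (2 * eps) = k_hi * a"
    using \<open>0 \<le> x\<close> \<open>0 < eps\<close> unfolding k_lo_def k_hi_def a_def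
    by (auto simp: power2_eq_square field_simps)
  show "(um - up) / 2 * exp (- (um - up) * \<bar>x\<bar> / eps) \<le> u x - up"
    and "u x - up \<le> (um - up) / 2 * exp (- lam * (um - up) * \<bar>x\<bar> / (2 * eps))"
    and "lam * (um - up)^2 / (4 * eps) * exp (- (um - up) * \<bar>x\<bar> / eps) \<le> - u' x"
    and "- u' x \<le> (um - up)^2 / (2 * eps) * exp (- lam * (um - up) * \<bar>x\<bar> / (2 * eps))"
    unfolding rates coefficients by (fact lower upper deriv_lower deriv_upper)+
qed

lemma exp_decay_left:
  fixes u u' :: "real \<Rightarrow> real"
  assumes "0 < eps" and "0 \<le> lam"
    and deriv: "\<And>x. (u has_real_derivative u' x) (at x)"
    and left_half: "\<And>x. x \<le> 0 \<Longrightarrow> (um + up) / 2 \<le> u x \<and> u x \<le> um"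
    and riccati: "\<And>x. x \<le> 0 \<Longrightarrow>
      lam * ((um - u x) * (u x - up)) / eps \<le> - u' x \<and> - u' x \<le> (um - u x) * (u x - up) / eps"
    and mid: "u 0 = (um + up) / 2"
    and "x \<le> 0"
  shows "(um - up) / 2 * exp (- (um - up) * \<bar>x\<bar> / eps) \<le> um - u x"
    and "um - u x \<le> (um - up) / 2 * exp (- lam * (um - up) * \<bar>x\<bar> / (2 * eps))"
    and "lam * (um - up)^2 / (4 * eps) * exp (- (um - up) * \<bar>x\<bar> / eps) \<le> - u' x"
    and "- u' x \<le> (um - up)^2 / (2 * eps) * exp (- lam * (um - up) * \<bar>x\<bar> / (2 * eps))"
proof -
  define v where "v t = um + up - u (- t)" for t
  have "(v has_real_derivative u' (- t)) (at t)" for t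
    unfolding v_def by (auto intro!: derivative_eq_intros DERIV_chain2[OF deriv])
  moreover have "up \<le> v t \<and> v t \<le> (um + up) / 2" if "0 \<le> t" for t
    using left_half[of "- t"] that unfolding v_def by auto
  moreover have "lam * ((um - v t) * (v t - up)) / eps \<le> - u' (- t)
      \<and> - u' (- t) \<le> (um - v t) * (v t - up) / eps" if "0 \<le> t" for t
    using riccati[of "- t"] that unfolding v_def by (simp add: mult.commute)
  moreover have "v 0 = (um + up) / 2" using mid unfolding v_def by simp
  moreover have "0 \<le> - x" using \<open>x \<le> 0\<close> by simp
  ultimately show "(um - up) / 2 * exp (- (um - up) * \<bar>x\<bar> / eps) \<le> um - u x"
    and "um - u x \<le> (um - up) / 2 * exp (- lam * (um - up) * \<bar>x\<bar> / (2 * eps))"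
    and "lam * (um - up)^2 / (4 * eps) * exp (- (um - up) * \<bar>x\<bar> / eps) \<le> - u' x"
    and "- u' x \<le> (um - up)^2 / (2 * eps) * exp (- lam * (um - up) * \<bar>x\<bar> / (2 * eps))"
    using exp_decay_right[OF \<open>0 < eps\<close> \<open>0 \<le> lam\<close>, of v "\<lambda>t. u' (- t)" up um "- x"]
    unfolding v_def by simp_all
qed

theorem theorem1p2:
  fixes eps delta um up :: real and u :: "real \<Rightarrow> real"
  assumes "eps > 0" and "delta > 0" and "um > up"
    and "0 < delta * (um - up) / (2 * eps^2)" and "delta * (um - up) / (2 * eps^2) \<le> 1/4"
    and "vd_shock eps delta um up u"
    and "mono u \<or> antimono u"
    and "u 0 = (um + up) / 2"
  defines "lam_lo \<equiv> sqrt 2 - 1" and "lam_hi \<equiv> (1::real)"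
  shows "(\<forall>x\<le>0. (um - up) / 2 * exp (- lam_hi * (um - up) * \<bar>x\<bar> / eps) \<le> um - u x \<and>
                  um - u x \<le> (um - up) / 2 * exp (- lam_lo * (um - up) * \<bar>x\<bar> / (2 * eps)))
       \<and> (\<forall>x\<ge>0. (um - up) / 2 * exp (- lam_hi * (um - up) * \<bar>x\<bar> / eps) \<le> u x - up \<and>
                  u x - up \<le> (um - up) / 2 * exp (- lam_lo * (um - up) * \<bar>x\<bar> / (2 * eps)))
       \<and> (\<forall>x. lam_lo * (um - up)^2 / (4 * eps) * exp (- lam_hi * (um - up) * \<bar>x\<bar> / eps) \<le> - deriv u x \<and>
                  - deriv u x \<le> lam_hi * (um - up)^2 / (2 * eps) * exp (- lam_lo * (um - up) * \<bar>x\<bar> / (2 * eps)))"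
proof -
  note shock = \<open>vd_shock eps delta um up u\<close>
  have lim: "(u \<longlongrightarrow> um) at_bot" "(u \<longlongrightarrow> up) at_top" "(deriv u \<longlongrightarrow> 0) at_top"
    using shock unfolding vd_shock_def by auto
  have "antimono u"
    using antimono_if_limits_decrease assms(7) lim(1,2) \<open>um > up\<close> .
  note between = antimono_between_limits[OF this lim(1,2)]
  have "delta * (um - up) \<le> eps^2 / 2" using assms(5) \<open>eps > 0\<close> by (simp add: field_simps)
  then interpret kdvb_profile eps delta um up u "deriv u" "deriv (deriv u)"
    using \<open>eps > 0\<close> \<open>delta > 0\<close> vd_shock_has_deriv[OF shock, of 0] vd_shock_has_deriv[OF shock, of 1]
      vd_shock_first_integral[OF shock] between lim(2,3)
    by unfold_locales simp_all
  have "0 \<le> lam_lo" "lam_lo^2 + 2 * lam_lo \<le> 1"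
    unfolding lam_lo_def by (simp_all add: power2_diff)
  then have riccati: "lam_lo * ((um - u x) * (u x - up)) / eps \<le> - deriv u x
      \<and> - deriv u x \<le> (um - u x) * (u x - up) / eps" for x
    using neg_deriv_ge neg_deriv_le by blast
  have right_half: "up \<le> u x \<and> u x \<le> (um + up) / 2" if "0 \<le> x" for x
    using antimonoD[OF \<open>antimono u\<close> that] between assms(8) by simp
  have left_half: "(um + up) / 2 \<le> u x \<and> u x \<le> um" if "x \<le> 0" for x
    using antimonoD[OF \<open>antimono u\<close> that] between assms(8) by simp
  note right = exp_decay_right[OF \<open>eps > 0\<close> \<open>0 \<le> lam_lo\<close> has_deriv(1) right_half riccati assms(8)]
    and left = exp_decay_left[OF \<open>eps > 0\<close> \<open>0 \<le> lam_lo\<close> has_deriv(1) left_half riccati assms(8)]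
  show ?thesis
    unfolding lam_hi_def mult_minus1 mult_1 using right left by (meson linorder_linear)
qed

end
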